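(* Let $\gamma\in(0,1]$, $\varsigma(t):=\gamma t^{\gamma-1}$, and $\bm\sigma:=\big(\varsigma(\tfrac1N),\dots,\varsigma(\tfrac{N-1}N)\big)/\varsigma(\tfrac1N)\in\mathbb R^{N-1}$. Let $\mathcal S:=\{\bm\Pi\in\mathbb R^{(N-1)\times(N-1)}:0\le\Pi_{ij}\le1\ \forall i,j,\ \bm\Pi\bm e=\bm e,\ \bm\Pi^\top\bm e=\bm e\}$ and let $\bm\Pi_i$ denote the $i$-th row of $\bm\Pi$. Consider: (P$_\sigma$) $\displaystyle\min_{\bm w\in\widehat{\mathcal V},\,\bm\Pi\in\mathcal S}\bm w^\top\bar{\bm g}$ s.t. $w_i-(\bm c_{[N-1]})_i\in[-(\bm\Pi_i\bm\sigma)\underline v_i,\,(\bm\Pi_i\bm\sigma)\bar v_i]$, $i\in[N-1]$; (L$_\sigma$) $\displaystyle\max\ \Big[\bm c_{[N-1]}^\top\bar{\bm g}-\bm\eta^\top\bm c_{[N-1]}+\sum_{m=1}^M\theta_mh_m\bm c_{[N-1]}^\top\bm\Delta^m+\min_{\bm\Pi\in\mathcal S}\sum_{i=1}^{N-1}(\bm\Pi_i\bm\sigma)\big(-(\underline\lambda_i\underline v_i+\bar\lambda_i\bar v_i)\big)\Big]$ over $(\underline{\bm\lambda},\bar{\bm\lambda},\beta,\bm\eta,\bm\theta)\in\mathbb R^{N-1}\times\mathbb R^{N-1}\times\mathbb R\times\mathbb R^{N-1}\times\mathbb R^M$ with $\bar{\bm g}-\underline{\bm\lambda}+\bar{\bm\lambda}+\beta\bm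 e-\bm\eta+\sum_{m=1}^M\theta_mh_m\bm\Delta^m=\bm 0$ and $\underline{\bm\lambda},\bar{\bm\lambda},\bm\eta,\bm\theta\ge0$; (D$_\sigma$) $\displaystyle\max\ \bm c_{[N-1]}^\top\bar{\bm g}+\sum_{m=1}^M\theta_mh_m\bm c_{[N-1]}^\top\bm\Delta^m-\bm\eta^\top\bm c_{[N-1]}-\sum_{i,j}\Theta_{ij}-\underline{\bm\tau}^\top\bm e-\bar{\bm\tau}^\top\bm e$ over $\underline{\bm\lambda},\bar{\bm\lambda},\bm\eta,\underline{\bm\tau},\bar{\bm\tau}\in\mathbb R^{N-1}$, $\beta\in\mathbb R$, $\bm\theta\in\mathbb R^M$, $\bm\Theta\in\mathbb R^{(N-1)\times(N-1)}$ subject to $\bar{\bm g}-\underline{\bm\lambda}+\bar{\bm\lambda}+\beta\bm e-\bm\eta+\sum_{m=1}^M\theta_mh_m\bm\Delta^m=\bm 0$, $(-\underline{\bm\lambda}\circ\underline{\bm v}-\bar{\bm\lambda}\circ\bar{\bm v})\bm\sigma^\top+\underline{\bm\tau}\bm e^\top+\bm e\bar{\bm\tau}^\top+\bm\Theta\ge0$ (entrywise, $\circ$ the Hadamard product), $\underline{\bm\lambda},\bar{\bm\lambda},\bm\eta,\bm\theta,\bm\Theta\ge0$. Then (P$_\sigma$) and (L$_\sigma$) can both be reformulated as (D$_\sigma$): their optimal values coincide with the optimal value of (D$_\sigma$).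
   Context: Let $N\ge3$ be an integer and $\underline x=x_1<x_2<\cdots<x_N=\bar x$ real numbers; $\bm e$ denotes the all-ones vector of the appropriate dimension. Define $\bm g:[\underline x,\bar x]\to\mathbb R^{N-1}$ by $\bm g(x_1)=\bm 0$ and, for $x\in(x_i,x_{i+1}]$ ($i\in\{1,\dots,N-1\}$), $\bm g(x)=(1,\dots,1,\frac{x-x_i}{x_{i+1}-x_i},0,\dots,0)$ with the first $i-1$ entries equal to $1$, the $i$-th entry $\frac{x-x_i}{x_{i+1}-x_i}$ and the last $N-1-i$ entries $0$. For $\bm v\in\mathbb R^{N-2}$ let $\bm R\bm v:=(v_1,\dots,v_{N-2},1-\bm e^\top\bm v)\in\mathbb R^{N-1}$. Let $\bm z\in\mathbb R^n$ and $\bm\xi^1,\dots,\bm\xi^K\in\mathbb R^n$ with $\bm z^\top\bm\xi^k\in[\underline x,\bar x]$ (the distribution of $\bm\xi$ puts mass $1/K$ on each $\bm\xi^k$), and $\bar{\bm g}:=\frac1K\sum_{k=1}^K\bm g(\bm z^\top\bm\xi^k)$. Let $M\ge1$ and, for $m=1,\dots,M$, let $r_1^m\le r_3^m$ and $r_2^m$ lie in $[\underline x,\bar x]$, $p^m\in[0,1]$, $h_m\in\{-1,1\}$, and $\bm\Delta^m:=(1-p^m)\bm g(r_1^m)+p^m\bm g(r_3^m)-\bm g(r_2^m)$. Let $\mathcal V:=\{\bm v\in\mathbb R^{N-2}:\bm v\ge0,\ \bm e^\top\bm v\le1,\ h_m(\bm R\bm v)^\top\bm\Delta^m\le0,\ m\in[M]\}$,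 assumed to have nonempty interior, let $\bm c\in\mathbb R^{N-2}$ be its analytic center (maximizer over the interior of the sum of the logarithms of the slacks of the defining inequalities) and $\bm c_{[N-1]}:=\bm R\bm c$ (so $\bm e^\top\bm c_{[N-1]}=1$). For $i\in[N-1]$ let $\underline v_i:=-\min\{(\bm R\bm v)_i-(\bm c_{[N-1]})_i:\bm v\in\mathcal V\}$ and $\bar v_i:=\max\{(\bm R\bm v)_i-(\bm c_{[N-1]})_i:\bm v\in\mathcal V\}$; $\underline{\bm v}=(\underline v_i)$, $\bar{\bm v}=(\bar v_i)$. Let $\widehat{\mathcal V}:=\{\bm w\in\mathbb R^{N-1}_+:\bm e^\top\bm w=1,\ h_m\bm w^\top\bm\Delta^m\le0,\ m\in[M]\}$. Optimal values are understood in the extended reals. *)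

theory Defs
  imports "HOL-Analysis.Analysis"
begin

text \<open>Conventions: vectors of R^d are functions nat => real, indexed by 1..d;
  values at other indices are irrelevant. Matrices are nat => nat => real.\<close>

definition dotv :: "nat \<Rightarrow> (nat \<Rightarrow> real) \<Rightarrow> (nat \<Rightarrow> real) \<Rightarrow> real" where
  "dotv d a b = (\<Sum>i=1..d. a i * b i)"

definition gfun :: "nat \<Rightarrow> (nat \<Rightarrow> real) \<Rightarrow> real \<Rightarrow> nat \<Rightarrow> real" where
  "gfun N x t j =
     (if t = x 1 then 0
      else (let i = (THE i. i \<in> {1..N-1} \<and> x i < t \<and> t \<le> x (Suc i)) in
            if j < i then 1
            else if j = i then (t - x i) / (x (Suc i) - x i)
            else 0))"

definition Rmap :: "nat \<Rightarrow> (nat \<Rightarrow> real) \<Rightarrow> nat \<Rightarrow> real" where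
  "Rmap N v j = (if j = N - 1 then 1 - (\<Sum>i=1..N-2. v i) else v j)"

definition gbar :: "nat \<Rightarrow> (nat \<Rightarrow> real) \<Rightarrow> nat \<Rightarrow> real^'n \<Rightarrow> (nat \<Rightarrow> real^'n) \<Rightarrow> nat \<Rightarrow> real" where
  "gbar N x K z xi j = (1 / real K) * (\<Sum>k=1..K. gfun N x (z \<bullet> xi k) j)"

definition DeltaF :: "nat \<Rightarrow> (nat \<Rightarrow> real) \<Rightarrow> (nat \<Rightarrow> real) \<Rightarrow> (nat \<Rightarrow> real) \<Rightarrow> (nat \<Rightarrow> real)
    \<Rightarrow> (nat \<Rightarrow> real) \<Rightarrow> nat \<Rightarrow> nat \<Rightarrow> real" where
  "DeltaF N x p r1 r2 r3 m j =
     (1 - p m) * gfun N x (r1 m) j + p m * gfun N x (r3 m) j - gfun N x (r2 m) j"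

definition Vset :: "nat \<Rightarrow> nat \<Rightarrow> (nat \<Rightarrow> real) \<Rightarrow> (nat \<Rightarrow> nat \<Rightarrow> real) \<Rightarrow> (nat \<Rightarrow> real) set" where
  "Vset N M h \<Delta> = {v. (\<forall>i\<in>{1..N-2}. 0 \<le> v i) \<and> (\<Sum>i=1..N-2. v i) \<le> 1 \<and>
       (\<forall>m\<in>{1..M}. h m * dotv (N-1) (Rmap N v) (\<Delta> m) \<le> 0)}"

definition in_int_V :: "nat \<Rightarrow> nat \<Rightarrow> (nat \<Rightarrow> real) \<Rightarrow> (nat \<Rightarrow> nat \<Rightarrow> real) \<Rightarrow> (nat \<Rightarrow> real) \<Rightarrow> bool" where
  "in_int_V N M h \<Delta> v \<longleftrightarrow> (\<exists>\<epsilon>>0. \<forall>u. (\<forall>i\<in>{1..N-2}. \<bar>u i - v i\<bar> < \<epsilon>) \<longrightarrow> u \<in> Vset N M h \<Delta>)"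

definition pos_slacks :: "nat \<Rightarrow> nat \<Rightarrow> (nat \<Rightarrow> real) \<Rightarrow> (nat \<Rightarrow> nat \<Rightarrow> real) \<Rightarrow> (nat \<Rightarrow> real) \<Rightarrow> bool" where
  "pos_slacks N M h \<Delta> v \<longleftrightarrow> (\<forall>i\<in>{1..N-2}. 0 < v i) \<and> 0 < 1 - (\<Sum>i=1..N-2. v i) \<and>
       (\<forall>m\<in>{1..M}. 0 < - (h m * dotv (N-1) (Rmap N v) (\<Delta> m)))"

definition log_barrier :: "nat \<Rightarrow> nat \<Rightarrow> (nat \<Rightarrow> real) \<Rightarrow> (nat \<Rightarrow> nat \<Rightarrow> real) \<Rightarrow> (nat \<Rightarrow> real) \<Rightarrow> real" where
  "log_barrier N M h \<Delta> v = (\<Sum>i=1..N-2. ln (v i)) + ln (1 - (\<Sum>i=1..N-2. v i)) +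
       (\<Sum>m=1..M. ln (- (h m * dotv (N-1) (Rmap N v) (\<Delta> m))))"

definition analytic_center :: "nat \<Rightarrow> nat \<Rightarrow> (nat \<Rightarrow> real) \<Rightarrow> (nat \<Rightarrow> nat \<Rightarrow> real) \<Rightarrow> (nat \<Rightarrow> real) \<Rightarrow> bool" where
  "analytic_center N M h \<Delta> c \<longleftrightarrow> in_int_V N M h \<Delta> c \<and> pos_slacks N M h \<Delta> c \<and>
     (\<forall>v. in_int_V N M h \<Delta> v \<and> pos_slacks N M h \<Delta> v \<longrightarrow> log_barrier N M h \<Delta> v \<le> log_barrier N M h \<Delta> c)"

definition vlow :: "nat \<Rightarrow> nat \<Rightarrow> (nat \<Rightarrow> real) \<Rightarrow> (nat \<Rightarrow> nat \<Rightarrow> real) \<Rightarrow> (nat \<Rightarrow> real) \<Rightarrow> nat \<Rightarrow> real" where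
  "vlow N M h \<Delta> c i = - Inf {Rmap N v i - Rmap N c i | v. v \<in> Vset N M h \<Delta>}"

definition vup :: "nat \<Rightarrow> nat \<Rightarrow> (nat \<Rightarrow> real) \<Rightarrow> (nat \<Rightarrow> nat \<Rightarrow> real) \<Rightarrow> (nat \<Rightarrow> real) \<Rightarrow> nat \<Rightarrow> real" where
  "vup N M h \<Delta> c i = Sup {Rmap N v i - Rmap N c i | v. v \<in> Vset N M h \<Delta>}"

definition Vhat :: "nat \<Rightarrow> nat \<Rightarrow> (nat \<Rightarrow> real) \<Rightarrow> (nat \<Rightarrow> nat \<Rightarrow> real) \<Rightarrow> (nat \<Rightarrow> real) set" where
  "Vhat N M h \<Delta> = {w. (\<forall>i\<in>{1..N-1}. 0 \<le> w i) \<and> (\<Sum>i=1..N-1. w i) = 1 \<and>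
       (\<forall>m\<in>{1..M}. h m * dotv (N-1) w (\<Delta> m) \<le> 0)}"

definition varsigma :: "real \<Rightarrow> real \<Rightarrow> real" where
  "varsigma \<gamma> t = \<gamma> * t powr (\<gamma> - 1)"

definition sigmav :: "real \<Rightarrow> nat \<Rightarrow> nat \<Rightarrow> real" where
  "sigmav \<gamma> N i = varsigma \<gamma> (real i / real N) / varsigma \<gamma> (1 / real N)"

definition Smat :: "nat \<Rightarrow> (nat \<Rightarrow> nat \<Rightarrow> real) set" where
  "Smat N = {Pm. (\<forall>i\<in>{1..N-1}. \<forall>j\<in>{1..N-1}. 0 \<le> Pm i j \<and> Pm i j \<le> 1) \<and>
       (\<forall>i\<in>{1..N-1}. (\<Sum>j=1..N-1. Pm i j) = 1) \<and>
       (\<forall>j\<in>{1..N-1}. (\<Sum>i=1..N-1. Pm i j) = 1)}"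

definition rowsig :: "nat \<Rightarrow> (nat \<Rightarrow> nat \<Rightarrow> real) \<Rightarrow> (nat \<Rightarrow> real) \<Rightarrow> nat \<Rightarrow> real" where
  "rowsig N Pm \<sigma> i = (\<Sum>j=1..N-1. Pm i j * \<sigma> j)"

text \<open>Optimal value of (P_sigma) (infimum in the extended reals; +\<infinity> if infeasible).\<close>
definition valP :: "nat \<Rightarrow> nat \<Rightarrow> (nat \<Rightarrow> real) \<Rightarrow> (nat \<Rightarrow> nat \<Rightarrow> real) \<Rightarrow> (nat \<Rightarrow> real)
    \<Rightarrow> (nat \<Rightarrow> real) \<Rightarrow> (nat \<Rightarrow> real) \<Rightarrow> (nat \<Rightarrow> real) \<Rightarrow> (nat \<Rightarrow> real) \<Rightarrow> ereal" where
  "valP N M h \<Delta> gb cN vl vu \<sigma> =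
     Inf {ereal (dotv (N-1) w gb) | w Pm. w \<in> Vhat N M h \<Delta> \<and> Pm \<in> Smat N \<and>
        (\<forall>i\<in>{1..N-1}. - (rowsig N Pm \<sigma> i) * vl i \<le> w i - cN i \<and> w i - cN i \<le> rowsig N Pm \<sigma> i * vu i)}"

text \<open>Optimal value of (L_sigma) (supremum in the extended reals; -\<infinity> if infeasible).\<close>
definition valL :: "nat \<Rightarrow> nat \<Rightarrow> (nat \<Rightarrow> real) \<Rightarrow> (nat \<Rightarrow> nat \<Rightarrow> real) \<Rightarrow> (nat \<Rightarrow> real)
    \<Rightarrow> (nat \<Rightarrow> real) \<Rightarrow> (nat \<Rightarrow> real) \<Rightarrow> (nat \<Rightarrow> real) \<Rightarrow> (nat \<Rightarrow> real) \<Rightarrow> ereal" where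
  "valL N M h \<Delta> gb cN vl vu \<sigma> =
     Sup {ereal (dotv (N-1) cN gb - dotv (N-1) \<eta> cN + (\<Sum>m=1..M. \<theta> m * h m * dotv (N-1) cN (\<Delta> m)))
            + (INF Pm\<in>Smat N. ereal (\<Sum>i=1..N-1. rowsig N Pm \<sigma> i * (- (ll i * vl i + lu i * vu i))))
          | ll lu (\<beta>::real) \<eta> \<theta>.
          (\<forall>i\<in>{1..N-1}. gb i - ll i + lu i + \<beta> - \<eta> i + (\<Sum>m=1..M. \<theta> m * h m * \<Delta> m i) = 0) \<and>
          (\<forall>i\<in>{1..N-1}. 0 \<le> ll i \<and> 0 \<le> lu i \<and> 0 \<le> \<eta> i) \<and> (\<forall>m\<in>{1..M}. 0 \<le> \<theta> m)}"

text \<open>Optimal value of (D_sigma) (supremum in the extended reals; -\<infinity> if infeasible).\<close>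
definition valD :: "nat \<Rightarrow> nat \<Rightarrow> (nat \<Rightarrow> real) \<Rightarrow> (nat \<Rightarrow> nat \<Rightarrow> real) \<Rightarrow> (nat \<Rightarrow> real)
    \<Rightarrow> (nat \<Rightarrow> real) \<Rightarrow> (nat \<Rightarrow> real) \<Rightarrow> (nat \<Rightarrow> real) \<Rightarrow> (nat \<Rightarrow> real) \<Rightarrow> ereal" where
  "valD N M h \<Delta> gb cN vl vu \<sigma> =
     Sup {ereal (dotv (N-1) cN gb + (\<Sum>m=1..M. \<theta> m * h m * dotv (N-1) cN (\<Delta> m)) - dotv (N-1) \<eta> cN
               - (\<Sum>i=1..N-1. \<Sum>j=1..N-1. Th i j) - (\<Sum>i=1..N-1. tl i) - (\<Sum>i=1..N-1. tu i))
          | ll lu \<eta> tl tu (\<beta>::real) \<theta> Th.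
          (\<forall>i\<in>{1..N-1}. gb i - ll i + lu i + \<beta> - \<eta> i + (\<Sum>m=1..M. \<theta> m * h m * \<Delta> m i) = 0) \<and>
          (\<forall>i\<in>{1..N-1}. \<forall>j\<in>{1..N-1}.
             0 \<le> (- ll i * vl i - lu i * vu i) * \<sigma> j + tl i + tu j + Th i j) \<and>
          (\<forall>i\<in>{1..N-1}. 0 \<le> ll i \<and> 0 \<le> lu i \<and> 0 \<le> \<eta> i) \<and> (\<forall>m\<in>{1..M}. 0 \<le> \<theta> m) \<and>
          (\<forall>i\<in>{1..N-1}. \<forall>j\<in>{1..N-1}. 0 \<le> Th i j)}"

end

theory Submission
  imports Defs
begin

text \<open>Treating the matrix \<open>\<Pi>\<close> as a variable, (P) is a linear program and (D) is its LP dual,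
  while (L) sits in between. Weak duality gives \<open>D \<le> L \<le> P\<close>: for (L) \<le> (P) pair the
  multipliers with a feasible \<open>(w, \<Pi>)\<close>; for (D) \<le> (L) note that \<open>\<tau>\<close>, \<open>\<Theta>\<close> are
  dual variables of the assignment problem hidden in the inner minimum over doubly stochastic
  matrices. The reverse inequality \<open>P \<le> D\<close> is strong LP duality: (P) is feasible, witnessed by
  \<open>w = R c\<close> and \<open>\<Pi> = I\<close>, so Farkas' lemma, obtained by Fourier--Motzkin
  elimination, turns every strict lower bound on (P) into a feasible point of (D) with a
  larger value.\<close>

section \<open>Farkas' lemma by Fourier--Motzkin elimination\<close>

definition satisfies :: "'j set \<Rightarrow> (('j \<Rightarrow> real) \<times> real) set \<Rightarrow> ('j \<Rightarrow> real) \<Rightarrow> bool" where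
  "satisfies J S x \<longleftrightarrow> (\<forall>s\<in>S. (\<Sum>j\<in>J. fst s j * x j) \<le> snd s)"

inductive_set conic_combs :: "(('j \<Rightarrow> real) \<times> real) set \<Rightarrow> (('j \<Rightarrow> real) \<times> real) set"
  for S where
  zero: "((\<lambda>_. 0), 0) \<in> conic_combs S"
| add: "s \<in> S \<Longrightarrow> 0 \<le> c \<Longrightarrow> u \<in> conic_combs S \<Longrightarrow>
    ((\<lambda>j. c * fst s j + fst u j), c * snd s + snd u) \<in> conic_combs S"

lemma conic_combs_add:
  "u \<in> conic_combs S \<Longrightarrow> u' \<in> conic_combs S \<Longrightarrow>
    ((\<lambda>j. fst u j + fst u' j), snd u + snd u') \<in> conic_combs S"
proof (induction u rule: conic_combs.induct)
  case (add s c u)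
  from conic_combs.add[OF add(1,2) add(4)[OF add(5)]] show ?case by (simp add: algebra_simps)
qed simp

lemma conic_combs_scale:
  "u \<in> conic_combs S \<Longrightarrow> 0 \<le> c \<Longrightarrow> ((\<lambda>j. c * fst u j), c * snd u) \<in> conic_combs S"
proof (induction u rule: conic_combs.induct)
  case zero
  then show ?case using conic_combs.zero by simp
next
  case (add s d u)
  from conic_combs.add[OF add(1) mult_nonneg_nonneg[OF add(5) add(2)] add(4)[OF add(5)]]
  show ?case by (simp add: algebra_simps)
qed

lemma conic_combs_base: "s \<in> S \<Longrightarrow> s \<in> conic_combs S"
  using conic_combs.add[OF _ _ conic_combs.zero, where s=s and c=1 and S=S] by simp

lemma conic_combs_trans: "u \<in> conic_combs S' \<Longrightarrow> S' \<subseteq> conic_combs S \<Longrightarrow> u \<in> conic_combs S"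
proof (induction u rule: conic_combs.induct)
  case (add s c u)
  then have "s \<in> conic_combs S" by auto
  from conic_combs_add[OF conic_combs_scale[OF this add(2)] add(4)[OF add(5)]] show ?case by simp
qed (rule conic_combs.zero)

lemma conic_combs_coord_zero: "u \<in> conic_combs S \<Longrightarrow> \<forall>s\<in>S. fst s k = 0 \<Longrightarrow> fst u k = 0"
  by (induction u rule: conic_combs.induct) auto

lemma conic_combs_multipliers:
  assumes "finite L" "u \<in> conic_combs ((\<lambda>l. (A l, b l)) ` L)"
  shows "\<exists>y. (\<forall>l\<in>L. 0 \<le> y l) \<and> (\<forall>j. fst u j = (\<Sum>l\<in>L. y l * A l j)) \<and> snd u = (\<Sum>l\<in>L. y l * b l)"
  using assms(2)
proof (induction u rule: conic_combs.induct)
  case zero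
  show ?case by (intro exI[of _ "\<lambda>_. 0"]) auto
next
  case (add s c u)
  obtain y where y: "\<forall>l\<in>L. 0 \<le> y l" "\<forall>j. fst u j = (\<Sum>l\<in>L. y l * A l j)" "snd u = (\<Sum>l\<in>L. y l * b l)"
    using add.IH by blast
  obtain l0 where l0: "l0 \<in> L" "s = (A l0, b l0)" using add.hyps(1) by auto
  define y' where "y' l = y l + (if l = l0 then c else 0)" for l
  have shift: "(\<Sum>l\<in>L. y' l * f l) = c * f l0 + (\<Sum>l\<in>L. y l * f l)" for f :: "_ \<Rightarrow> real"
  proof -
    have "(\<Sum>l\<in>L. y' l * f l) = (\<Sum>l\<in>L. y l * f l + (if l = l0 then c * f l0 else 0))"
      by (rule sum.cong) (auto simp: y'_def algebra_simps)
    with l0(1) assms(1) show ?thesis by (simp add: sum.distrib)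
  qed
  have "\<forall>l\<in>L. 0 \<le> y' l" using y(1) add.hyps(2) by (simp add: y'_def)
  with y l0 show ?case by (intro exI[of _ y']) (simp add: shift)
qed

lemma exists_between_finite:
  fixes A B :: "real set"
  assumes "finite A" "finite B" "\<forall>a\<in>A. \<forall>b\<in>B. a \<le> b"
  shows "\<exists>t. (\<forall>a\<in>A. a \<le> t) \<and> (\<forall>b\<in>B. t \<le> b)"
proof (cases "B = {}")
  case True
  with assms show ?thesis by (intro exI[of _ "Max (insert 0 A)"]) auto
next
  case False
  with assms show ?thesis by (intro exI[of _ "Min B"]) auto
qed

definition fm_eliminate :: "'j \<Rightarrow> (('j \<Rightarrow> real) \<times> real) set \<Rightarrow> (('j \<Rightarrow> real) \<times> real) set" where
  "fm_eliminate k S = {s\<in>S. fst s k = 0} \<union>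
     (\<lambda>(p, q). ((\<lambda>j. - fst q k * fst p j + fst p k * fst q j), - fst q k * snd p + fst p k * snd q))
       ` ({p\<in>S. 0 < fst p k} \<times> {q\<in>S. fst q k < 0})"

lemma finite_fm_eliminate: "finite S \<Longrightarrow> finite (fm_eliminate k S)"
  unfolding fm_eliminate_def by auto

lemma fm_eliminate_coord_zero: "\<forall>s\<in>fm_eliminate k S. fst s k = 0"
  unfolding fm_eliminate_def by auto

lemma fm_eliminate_subset: "fm_eliminate k S \<subseteq> conic_combs S"
proof
  fix s assume "s \<in> fm_eliminate k S"
  then consider "s \<in> S" | p q where "p \<in> S" "q \<in> S" "0 < fst p k" "fst q k < 0"
      "s = ((\<lambda>j. - fst q k * fst p j + fst p k * fst q j), - fst q k * snd p + fst p k * snd q)"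
    unfolding fm_eliminate_def by auto
  then show "s \<in> conic_combs S"
  proof cases
    case 2
    then have "0 \<le> - fst q k" "0 \<le> fst p k" by auto
    from conic_combs.add[OF 2(1) this(1) conic_combs.add[OF 2(2) this(2) conic_combs.zero]]
    show ?thesis using 2(5) by simp
  qed (rule conic_combs_base)
qed

lemma satisfies_fm_eliminate:
  assumes "finite S" "finite J" "k \<notin> J" and x: "satisfies J (fm_eliminate k S) x"
  shows "\<exists>t. satisfies (insert k J) S (x(k := t))"
proof -
  define r where "r s = snd s - (\<Sum>j\<in>J. fst s j * x j)" for s
  have r_nonneg: "0 \<le> r s" if "s \<in> S" "fst s k = 0" for s
    using x that unfolding satisfies_def fm_eliminate_def r_def by auto
  \<comment> \<open>Each row bounds \<open>x\<^sub>k\<close> by its slack divided by its coefficient; the combined rows of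
    \<open>fm_eliminate k S\<close> say that every lower bound lies below every upper bound.\<close>
  have r_pair: "r q / fst q k \<le> r p / fst p k" if "p \<in> S" "q \<in> S" "0 < fst p k" "fst q k < 0" for p q
  proof -
    have lin: "(\<Sum>j\<in>J. (\<alpha> * a j + \<beta> * b j) * x j) =
        \<alpha> * (\<Sum>j\<in>J. a j * x j) + \<beta> * (\<Sum>j\<in>J. b j * x j)" for \<alpha> \<beta> a b
      by (simp add: sum.distrib sum_distrib_left algebra_simps)
    have "((\<lambda>j. - fst q k * fst p j + fst p k * fst q j), - fst q k * snd p + fst p k * snd q)
        \<in> fm_eliminate k S"
      unfolding fm_eliminate_def using that by (auto intro!: rev_image_eqI[where x="(p, q)"])
    with x have "(\<Sum>j\<in>J. (- fst q k * fst p j + fst p k * fst q j) * x j) \<le> - fst q k * snd p + fst p k * snd q"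
      unfolding satisfies_def by fastforce
    then have "0 \<le> - fst q k * r p + fst p k * r q"
      unfolding lin r_def by (simp add: algebra_simps)
    with that(3,4) show ?thesis by (simp add: field_simps)
  qed
  obtain t where t: "\<forall>q\<in>{q\<in>S. fst q k < 0}. r q / fst q k \<le> t" "\<forall>p\<in>{p\<in>S. 0 < fst p k}. t \<le> r p / fst p k"
    using exists_between_finite[of "(\<lambda>q. r q / fst q k) ` {q\<in>S. fst q k < 0}"
        "(\<lambda>p. r p / fst p k) ` {p\<in>S. 0 < fst p k}"] r_pair assms(1) by auto
  have bound: "fst s k * t \<le> r s" if "s \<in> S" for s
  proof (cases "fst s k" "0 :: real" rule: linorder_cases)
    case less
    with t(1) that have "r s / fst s k \<le> t" by blast
    with less show ?thesis by (simp add: neg_divide_le_eq mult.commute)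
  next
    case greater
    with t(2) that have "t \<le> r s / fst s k" by blast
    with greater show ?thesis by (simp add: pos_le_divide_eq mult.commute)
  qed (use r_nonneg that in auto)
  have eval: "(\<Sum>j\<in>insert k J. fst s j * (x(k := t)) j) = fst s k * t + (\<Sum>j\<in>J. fst s j * x j)" for s
    using assms(2,3) by (simp, intro sum.cong) auto
  have "satisfies (insert k J) S (x(k := t))"
    unfolding satisfies_def eval using bound by (simp add: r_def le_diff_eq)
  then show ?thesis ..
qed

lemma fourier_motzkin:
  assumes "finite J" "finite S" "\<nexists>x. satisfies J S x"
  shows "\<exists>u\<in>conic_combs S. (\<forall>j\<in>J. fst u j = 0) \<and> snd u < 0"
  using assms
proof (induction J arbitrary: S rule: finite_induct)
  case empty
  then obtain s where "s \<in> S" "snd s < 0" by (force simp: satisfies_def)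
  then show ?case by (blast intro: conic_combs_base)
next
  case (insert k J)
  have "\<nexists>x. satisfies J (fm_eliminate k S) x"
    using satisfies_fm_eliminate[OF insert.prems(1) insert.hyps(1,2)] insert.prems(2) by blast
  then obtain u where u: "u \<in> conic_combs (fm_eliminate k S)" "\<forall>j\<in>J. fst u j = 0" "snd u < 0"
    using insert.IH finite_fm_eliminate[OF insert.prems(1)] by blast
  moreover have "fst u k = 0"
    using conic_combs_coord_zero[OF u(1) fm_eliminate_coord_zero] .
  ultimately show ?case using conic_combs_trans[OF u(1) fm_eliminate_subset] by auto
qed

lemma farkas_lemma:
  fixes A :: "'l \<Rightarrow> 'j \<Rightarrow> real" and b :: "'l \<Rightarrow> real"
  assumes "finite L" "finite J" "\<nexists>x. \<forall>l\<in>L. (\<Sum>j\<in>J. A l j * x j) \<le> b l"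
  shows "\<exists>y. (\<forall>l\<in>L. 0 \<le> y l) \<and> (\<forall>j\<in>J. (\<Sum>l\<in>L. y l * A l j) = 0) \<and> (\<Sum>l\<in>L. y l * b l) < 0"
proof -
  have "\<nexists>x. satisfies J ((\<lambda>l. (A l, b l)) ` L) x"
    using assms(3) by (auto simp: satisfies_def)
  with fourier_motzkin[OF assms(2)] assms(1) obtain u where
    u: "u \<in> conic_combs ((\<lambda>l. (A l, b l)) ` L)" "\<forall>j\<in>J. fst u j = 0" "snd u < 0" by blast
  from conic_combs_multipliers[OF assms(1) u(1)] u(2,3) show ?thesis by metis
qed

lemma combined_rows_le:
  fixes A :: "'l \<Rightarrow> 'j \<Rightarrow> real"
  assumes "\<forall>l\<in>L. 0 \<le> y l" and "\<forall>l\<in>L. (\<Sum>j\<in>J. A l j * x j) \<le> b l"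
  shows "(\<Sum>j\<in>J. (\<Sum>l\<in>L. y l * A l j) * x j) \<le> (\<Sum>l\<in>L. y l * b l)"
proof -
  have "(\<Sum>j\<in>J. (\<Sum>l\<in>L. y l * A l j) * x j) = (\<Sum>l\<in>L. y l * (\<Sum>j\<in>J. A l j * x j))"
    by (simp add: sum_distrib_left sum_distrib_right mult.assoc) (rule sum.swap)
  also have "\<dots> \<le> (\<Sum>l\<in>L. y l * b l)"
    using assms by (intro sum_mono mult_left_mono) auto
  finally show ?thesis .
qed

text \<open>The objective row \<open>c \<bullet> x \<le> v\<close> is appended to the system; by feasibility of \<open>x\<^sub>0\<close> its
  Farkas multiplier cannot vanish, and dividing by it gives the dual solution.\<close>
lemma lp_dual_certificate:
  fixes A :: "'l \<Rightarrow> 'j \<Rightarrow> real" and b :: "'l \<Rightarrow> real" and c :: "'j \<Rightarrow> real"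
  assumes "finite L" "finite J"
    and feasible: "\<forall>l\<in>L. (\<Sum>j\<in>J. A l j * x\<^sub>0 j) \<le> b l"
    and bound: "\<And>x. \<forall>l\<in>L. (\<Sum>j\<in>J. A l j * x j) \<le> b l \<Longrightarrow> v < (\<Sum>j\<in>J. c j * x j)"
  shows "\<exists>y. (\<forall>l\<in>L. 0 \<le> y l) \<and> (\<forall>j\<in>J. (\<Sum>l\<in>L. y l * A l j) = - c j) \<and> v < - (\<Sum>l\<in>L. y l * b l)"
proof -
  define A' where "A' l = (case l of None \<Rightarrow> c | Some l \<Rightarrow> A l)" for l
  define b' where "b' l = (case l of None \<Rightarrow> v | Some l \<Rightarrow> b l)" for l
  define L' where "L' = insert None (Some ` L)"
  have "\<nexists>x. \<forall>l\<in>L'. (\<Sum>j\<in>J. A' l j * x j) \<le> b' l"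
  proof
    assume "\<exists>x. \<forall>l\<in>L'. (\<Sum>j\<in>J. A' l j * x j) \<le> b' l"
    then obtain x where "\<forall>l\<in>L. (\<Sum>j\<in>J. A l j * x j) \<le> b l" "(\<Sum>j\<in>J. c j * x j) \<le> v"
      by (auto simp: L'_def A'_def b'_def)
    with bound show False by (meson not_less)
  qed
  then obtain z where z: "\<forall>l\<in>L'. 0 \<le> z l" "\<forall>j\<in>J. (\<Sum>l\<in>L'. z l * A' l j) = 0"
      "(\<Sum>l\<in>L'. z l * b' l) < 0"
    using farkas_lemma[of L' J A' b'] assms(1,2) unfolding L'_def by blast
  have sum_L': "(\<Sum>l\<in>L'. z l * f l) = z None * f None + (\<Sum>l\<in>L. z (Some l) * f (Some l))" for f
    using assms(1) by (simp add: L'_def sum.reindex)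
  define t where "t = z None"
  have cols: "(\<Sum>l\<in>L. z (Some l) * A l j) = - (t * c j)" if "j \<in> J" for j
    using z(2) that unfolding sum_L' by (auto simp: A'_def b'_def t_def)
  have val: "(\<Sum>l\<in>L. z (Some l) * b l) < - (t * v)"
    using z(3) unfolding sum_L' by (simp add: A'_def b'_def t_def)
  have "t \<noteq> 0"
  proof
    assume "t = 0"
    have "(\<Sum>j\<in>J. (\<Sum>l\<in>L. z (Some l) * A l j) * x\<^sub>0 j) \<le> (\<Sum>l\<in>L. z (Some l) * b l)"
      using z(1) feasible by (intro combined_rows_le) (auto simp: L'_def)
    with cols val \<open>t = 0\<close> show False by simp
  qed
  with z(1) have "0 < t" unfolding L'_def t_def by auto
  show ?thesis
  proof (intro exI[of _ "\<lambda>l. z (Some l) / t"] conjI ballI)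
    show "0 \<le> z (Some l) / t" if "l \<in> L" for l
      using z(1) that \<open>0 < t\<close> unfolding L'_def by auto
    show "(\<Sum>l\<in>L. z (Some l) / t * A l j) = - c j" if "j \<in> J" for j
      using cols[OF that] \<open>0 < t\<close> by (simp add: sum_divide_distrib[symmetric])
    show "v < - (\<Sum>l\<in>L. z (Some l) / t * b l)"
      using val \<open>0 < t\<close> by (simp add: sum_divide_distrib[symmetric] field_simps)
  qed
qed

section \<open>Doubly stochastic matrices\<close>

lemma doubly_stochastic_lower_bound:
  assumes Pm: "Pm \<in> Smat N"
    and coupling: "\<forall>i\<in>{1..N-1}. \<forall>j\<in>{1..N-1}. 0 \<le> a i * s j + tlo i + tup j + \<Theta> i j"
    and \<Theta>_nonneg: "\<forall>i\<in>{1..N-1}. \<forall>j\<in>{1..N-1}. 0 \<le> \<Theta> i j"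
  shows "- (\<Sum>i=1..N-1. \<Sum>j=1..N-1. \<Theta> i j) - (\<Sum>i=1..N-1. tlo i) - (\<Sum>j=1..N-1. tup j)
     \<le> (\<Sum>i=1..N-1. rowsig N Pm s i * a i)"
proof -
  have P: "\<forall>i\<in>{1..N-1}. \<forall>j\<in>{1..N-1}. 0 \<le> Pm i j \<and> Pm i j \<le> 1"
    "\<forall>i\<in>{1..N-1}. (\<Sum>j=1..N-1. Pm i j) = 1" "\<forall>j\<in>{1..N-1}. (\<Sum>i=1..N-1. Pm i j) = 1"
    using Pm unfolding Smat_def by auto
  have "(\<Sum>i=1..N-1. tlo i) = (\<Sum>i=1..N-1. \<Sum>j=1..N-1. Pm i j * tlo i)"
    using P(2) by (simp add: sum_distrib_right[symmetric])
  moreover have "(\<Sum>j=1..N-1. tup j) = (\<Sum>i=1..N-1. \<Sum>j=1..N-1. Pm i j * tup j)"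
    using P(3) by (subst sum.swap) (simp add: sum_distrib_right[symmetric])
  ultimately have "- (\<Sum>i=1..N-1. \<Sum>j=1..N-1. \<Theta> i j) - (\<Sum>i=1..N-1. tlo i) - (\<Sum>j=1..N-1. tup j)
      = (\<Sum>i=1..N-1. \<Sum>j=1..N-1. - \<Theta> i j - Pm i j * tlo i - Pm i j * tup j)"
    by (simp add: sum_subtractf sum_negf)
  also have "\<dots> \<le> (\<Sum>i=1..N-1. \<Sum>j=1..N-1. Pm i j * (a i * s j))"
  proof (intro sum_mono)
    fix i j assume ij: "i \<in> {1..N-1}" "j \<in> {1..N-1}"
    have "0 \<le> Pm i j * (a i * s j + tlo i + tup j + \<Theta> i j)" using P(1) coupling ij by simp
    moreover have "0 \<le> \<Theta> i j * (1 - Pm i j)" using P(1) \<Theta>_nonneg ij by simp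
    ultimately show "- \<Theta> i j - Pm i j * tlo i - Pm i j * tup j \<le> Pm i j * (a i * s j)"
      by (simp add: algebra_simps)
  qed
  also have "\<dots> = (\<Sum>i=1..N-1. rowsig N Pm s i * a i)"
    unfolding rowsig_def by (simp add: sum_distrib_left sum_distrib_right algebra_simps)
  finally show ?thesis .
qed

definition id_mat :: "nat \<Rightarrow> nat \<Rightarrow> real" where
  "id_mat i j = (if i = j then 1 else 0)"

lemma id_mat_in_Smat: "id_mat \<in> Smat N"
  unfolding Smat_def id_mat_def by (simp add: sum.delta)

lemma rowsig_id_mat: "i \<in> {1..N-1} \<Longrightarrow> rowsig N id_mat s i = s i"
  unfolding rowsig_def id_mat_def by (simp add: if_distrib[of "\<lambda>a. a * _"] cong: if_cong)

section \<open>Problem (P) as a system of linear inequalities\<close>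

lemma sum_if_zero: "(\<Sum>j\<in>A. if P then f j else 0) = (if P then (\<Sum>j\<in>A. f j) else 0)"
  by simp

text \<open>The variables are \<open>Inl i\<close> for \<open>w\<^sub>i\<close> and \<open>Inr (i, j)\<close> for \<open>\<Pi>\<^sub>i\<^sub>j\<close>; there is one row
  per inequality of (P), and every equality is split into two opposite inequalities.\<close>
datatype primal_row = WNonneg nat | BoxLo nat | BoxUp nat | RowLe nat | RowGe nat | ColLe nat | ColGe nat
  | PiNonneg nat nat | PiLe1 nat nat | Moment nat | SumLe | SumGe

definition primal_rows :: "nat \<Rightarrow> nat \<Rightarrow> primal_row set" where
  "primal_rows n M = WNonneg ` {1..n} \<union> BoxLo ` {1..n} \<union> BoxUp ` {1..n} \<union> RowLe ` {1..n}
     \<union> RowGe ` {1..n} \<union> ColLe ` {1..n} \<union> ColGe ` {1..n} \<union> case_prod PiNonneg ` ({1..n} \<times> {1..n})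
     \<union> case_prod PiLe1 ` ({1..n} \<times> {1..n}) \<union> Moment ` {1..M} \<union> {SumLe, SumGe}"

definition primal_vars :: "nat \<Rightarrow> (nat + nat \<times> nat) set" where
  "primal_vars n = Inl ` {1..n} \<union> Inr ` ({1..n} \<times> {1..n})"

lemma finite_primal_rows: "finite (primal_rows n M)"
  unfolding primal_rows_def by auto

lemma finite_primal_vars: "finite (primal_vars n)"
  unfolding primal_vars_def by auto

lemma sum_primal_rows:
  "(\<Sum>l\<in>primal_rows n M. f l) =
     (\<Sum>i=1..n. f (WNonneg i)) + (\<Sum>i=1..n. f (BoxLo i)) + (\<Sum>i=1..n. f (BoxUp i))
     + (\<Sum>i=1..n. f (RowLe i)) + (\<Sum>i=1..n. f (RowGe i)) + (\<Sum>i=1..n. f (ColLe i))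
     + (\<Sum>i=1..n. f (ColGe i)) + (\<Sum>i=1..n. \<Sum>j=1..n. f (PiNonneg i j))
     + (\<Sum>i=1..n. \<Sum>j=1..n. f (PiLe1 i j)) + (\<Sum>m=1..M. f (Moment m)) + f SumLe + f SumGe"
  unfolding primal_rows_def
  by (subst sum.union_disjoint, force, force, force)+
    (simp add: sum.reindex inj_on_def sum.cartesian_product' add.assoc)

lemma ball_primal_rows:
  "(\<forall>l\<in>primal_rows n M. P l) \<longleftrightarrow>
     (\<forall>i\<in>{1..n}. P (WNonneg i) \<and> P (BoxLo i) \<and> P (BoxUp i) \<and> P (RowLe i) \<and> P (RowGe i)
        \<and> P (ColLe i) \<and> P (ColGe i))
     \<and> (\<forall>i\<in>{1..n}. \<forall>j\<in>{1..n}. P (PiNonneg i j) \<and> P (PiLe1 i j))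
     \<and> (\<forall>m\<in>{1..M}. P (Moment m)) \<and> P SumLe \<and> P SumGe"
  unfolding primal_rows_def by (auto simp: ball_Un)

lemma sum_primal_vars:
  "(\<Sum>v\<in>primal_vars n. f v) = (\<Sum>i=1..n. f (Inl i)) + (\<Sum>i=1..n. \<Sum>j=1..n. f (Inr (i, j)))"
proof -
  have "(\<Sum>v\<in>primal_vars n. f v) = (\<Sum>v\<in>Inl ` {1..n}. f v) + (\<Sum>v\<in>Inr ` ({1..n} \<times> {1..n}). f v)"
    unfolding primal_vars_def by (rule sum.union_disjoint) auto
  then show ?thesis by (simp add: sum.reindex sum.cartesian_product)
qed

lemma ball_primal_vars:
  "(\<forall>v\<in>primal_vars n. P v) \<longleftrightarrow> (\<forall>i\<in>{1..n}. P (Inl i)) \<and> (\<forall>i\<in>{1..n}. \<forall>j\<in>{1..n}. P (Inr (i, j)))"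
  unfolding primal_vars_def by auto

section \<open>Weak and strong duality\<close>

context
  fixes N M :: nat and h gb cN vl vu \<sigma> :: "nat \<Rightarrow> real" and \<Delta> :: "nat \<Rightarrow> nat \<Rightarrow> real"
begin

definition stationary :: "(nat \<Rightarrow> real) \<Rightarrow> (nat \<Rightarrow> real) \<Rightarrow> real \<Rightarrow> (nat \<Rightarrow> real) \<Rightarrow> (nat \<Rightarrow> real) \<Rightarrow> bool"
  where "stationary ll lu \<beta> \<eta> \<theta> \<longleftrightarrow>
    (\<forall>i\<in>{1..N-1}. gb i - ll i + lu i + \<beta> - \<eta> i + (\<Sum>m=1..M. \<theta> m * h m * \<Delta> m i) = 0)"

definition multipliers_nonneg :: "(nat \<Rightarrow> real) \<Rightarrow> (nat \<Rightarrow> real) \<Rightarrow> (nat \<Rightarrow> real) \<Rightarrow> (nat \<Rightarrow> real) \<Rightarrow> bool"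
  where "multipliers_nonneg ll lu \<eta> \<theta> \<longleftrightarrow>
    (\<forall>i\<in>{1..N-1}. 0 \<le> ll i \<and> 0 \<le> lu i \<and> 0 \<le> \<eta> i) \<and> (\<forall>m\<in>{1..M}. 0 \<le> \<theta> m)"

definition coupled ::
    "(nat \<Rightarrow> real) \<Rightarrow> (nat \<Rightarrow> real) \<Rightarrow> (nat \<Rightarrow> real) \<Rightarrow> (nat \<Rightarrow> real) \<Rightarrow> (nat \<Rightarrow> nat \<Rightarrow> real) \<Rightarrow> bool"
  where "coupled ll lu tlo tup \<Theta> \<longleftrightarrow>
    (\<forall>i\<in>{1..N-1}. \<forall>j\<in>{1..N-1}. 0 \<le> (- ll i * vl i - lu i * vu i) * \<sigma> j + tlo i + tup j + \<Theta> i j)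
    \<and> (\<forall>i\<in>{1..N-1}. \<forall>j\<in>{1..N-1}. 0 \<le> \<Theta> i j)"

definition lagrangian_value :: "(nat \<Rightarrow> real) \<Rightarrow> (nat \<Rightarrow> real) \<Rightarrow> (nat \<Rightarrow> real) \<Rightarrow> (nat \<Rightarrow> real) \<Rightarrow> ereal"
  where "lagrangian_value ll lu \<eta> \<theta> =
    ereal (dotv (N-1) cN gb - dotv (N-1) \<eta> cN + (\<Sum>m=1..M. \<theta> m * h m * dotv (N-1) cN (\<Delta> m)))
    + (INF Pm\<in>Smat N. ereal (\<Sum>i=1..N-1. rowsig N Pm \<sigma> i * - (ll i * vl i + lu i * vu i)))"

definition dual_value ::
    "(nat \<Rightarrow> real) \<Rightarrow> (nat \<Rightarrow> real) \<Rightarrow> (nat \<Rightarrow> real) \<Rightarrow> (nat \<Rightarrow> real) \<Rightarrow> (nat \<Rightarrow> nat \<Rightarrow> real) \<Rightarrow> real"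
  where "dual_value \<eta> \<theta> tlo tup \<Theta> =
    dotv (N-1) cN gb + (\<Sum>m=1..M. \<theta> m * h m * dotv (N-1) cN (\<Delta> m)) - dotv (N-1) \<eta> cN
    - (\<Sum>i=1..N-1. \<Sum>j=1..N-1. \<Theta> i j) - (\<Sum>i=1..N-1. tlo i) - (\<Sum>i=1..N-1. tup i)"

definition in_box :: "(nat \<Rightarrow> nat \<Rightarrow> real) \<Rightarrow> (nat \<Rightarrow> real) \<Rightarrow> bool"
  where "in_box Pm w \<longleftrightarrow> (\<forall>i\<in>{1..N-1}.
    - rowsig N Pm \<sigma> i * vl i \<le> w i - cN i \<and> w i - cN i \<le> rowsig N Pm \<sigma> i * vu i)"

lemma valP_le:
  "w \<in> Vhat N M h \<Delta> \<Longrightarrow> Pm \<in> Smat N \<Longrightarrow> in_box Pm w \<Longrightarrow>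
    valP N M h \<Delta> gb cN vl vu \<sigma> \<le> ereal (dotv (N-1) w gb)"
  unfolding valP_def in_box_def by (rule Inf_lower) blast

lemma le_valP:
  "(\<And>w Pm. w \<in> Vhat N M h \<Delta> \<Longrightarrow> Pm \<in> Smat N \<Longrightarrow> in_box Pm w \<Longrightarrow> B \<le> ereal (dotv (N-1) w gb))
    \<Longrightarrow> B \<le> valP N M h \<Delta> gb cN vl vu \<sigma>"
  unfolding valP_def in_box_def by (rule Inf_greatest) blast

lemma le_valL:
  "stationary ll lu \<beta> \<eta> \<theta> \<Longrightarrow> multipliers_nonneg ll lu \<eta> \<theta> \<Longrightarrow>
    lagrangian_value ll lu \<eta> \<theta> \<le> valL N M h \<Delta> gb cN vl vu \<sigma>"
  unfolding valL_def lagrangian_value_def stationary_def multipliers_nonneg_def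
  by (rule Sup_upper) blast

lemma valL_le:
  "(\<And>ll lu \<beta> \<eta> \<theta>. stationary ll lu \<beta> \<eta> \<theta> \<Longrightarrow> multipliers_nonneg ll lu \<eta> \<theta> \<Longrightarrow>
      lagrangian_value ll lu \<eta> \<theta> \<le> B)
    \<Longrightarrow> valL N M h \<Delta> gb cN vl vu \<sigma> \<le> B"
  unfolding valL_def lagrangian_value_def stationary_def multipliers_nonneg_def
  by (rule Sup_least) blast

lemma le_valD:
  "stationary ll lu \<beta> \<eta> \<theta> \<Longrightarrow> multipliers_nonneg ll lu \<eta> \<theta> \<Longrightarrow> coupled ll lu tlo tup \<Theta> \<Longrightarrow>
    ereal (dual_value \<eta> \<theta> tlo tup \<Theta>) \<le> valD N M h \<Delta> gb cN vl vu \<sigma>"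
  unfolding valD_def dual_value_def stationary_def multipliers_nonneg_def coupled_def
  by (rule Sup_upper) blast

lemma valD_le:
  "(\<And>ll lu \<beta> \<eta> \<theta> tlo tup \<Theta>. stationary ll lu \<beta> \<eta> \<theta> \<Longrightarrow> multipliers_nonneg ll lu \<eta> \<theta> \<Longrightarrow>
      coupled ll lu tlo tup \<Theta> \<Longrightarrow> ereal (dual_value \<eta> \<theta> tlo tup \<Theta>) \<le> B)
    \<Longrightarrow> valD N M h \<Delta> gb cN vl vu \<sigma> \<le> B"
  unfolding valD_def dual_value_def stationary_def multipliers_nonneg_def coupled_def
  by (rule Sup_least) blast

lemma stationary_dotv:
  assumes "stationary ll lu \<beta> \<eta> \<theta>"
  shows "dotv (N-1) u gb = dotv (N-1) u ll - dotv (N-1) u lu - \<beta> * (\<Sum>i=1..N-1. u i)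
    + dotv (N-1) u \<eta> - (\<Sum>m=1..M. \<theta> m * h m * dotv (N-1) u (\<Delta> m))"
proof -
  have "dotv (N-1) u gb = (\<Sum>i=1..N-1. u i * ll i - u i * lu i - \<beta> * u i + u i * \<eta> i
      - (\<Sum>m=1..M. \<theta> m * h m * (u i * \<Delta> m i)))"
    unfolding dotv_def
  proof (rule sum.cong[OF refl])
    fix i assume "i \<in> {1..N-1}"
    with assms have gb: "gb i = ll i - lu i - \<beta> + \<eta> i - (\<Sum>m=1..M. \<theta> m * h m * \<Delta> m i)"
      unfolding stationary_def by fastforce
    show "u i * gb i = u i * ll i - u i * lu i - \<beta> * u i + u i * \<eta> i
      - (\<Sum>m=1..M. \<theta> m * h m * (u i * \<Delta> m i))"
      unfolding gb by (simp add: sum_distrib_left algebra_simps)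
  qed
  also have "\<dots> = dotv (N-1) u ll - dotv (N-1) u lu - \<beta> * (\<Sum>i=1..N-1. u i)
    + dotv (N-1) u \<eta> - (\<Sum>m=1..M. \<theta> m * h m * dotv (N-1) u (\<Delta> m))"
    unfolding dotv_def
    by (simp add: sum.distrib sum_subtractf sum_distrib_left mult.assoc) (rule sum.swap)
  finally show ?thesis .
qed

lemma lagrangian_value_le_primal:
  assumes st: "stationary ll lu \<beta> \<eta> \<theta>" and nonneg: "multipliers_nonneg ll lu \<eta> \<theta>"
    and w: "w \<in> Vhat N M h \<Delta>" and Pm: "Pm \<in> Smat N" and box: "in_box Pm w"
    and cN_sum: "(\<Sum>i=1..N-1. cN i) = 1"
  shows "lagrangian_value ll lu \<eta> \<theta> \<le> ereal (dotv (N-1) w gb)"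
proof -
  have w_nonneg: "\<forall>i\<in>{1..N-1}. 0 \<le> w i" and w_sum: "(\<Sum>i=1..N-1. w i) = 1"
    and w_moments: "\<forall>m\<in>{1..M}. h m * dotv (N-1) w (\<Delta> m) \<le> 0"
    using w unfolding Vhat_def by auto
  have "0 \<le> dotv (N-1) w \<eta>"
    unfolding dotv_def using w_nonneg nonneg by (intro sum_nonneg) (auto simp: multipliers_nonneg_def)
  moreover have "(\<Sum>m=1..M. \<theta> m * h m * dotv (N-1) w (\<Delta> m)) \<le> 0"
    using w_moments nonneg unfolding multipliers_nonneg_def
    by (intro sum_nonpos) (simp add: mult.assoc mult_nonneg_nonpos)
  moreover have "(\<Sum>i=1..N-1. rowsig N Pm \<sigma> i * - (ll i * vl i + lu i * vu i))
      \<le> (\<Sum>i=1..N-1. ll i * (w i - cN i) - lu i * (w i - cN i))"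
  proof (intro sum_mono)
    fix i assume i: "i \<in> {1..N-1}"
    have box_i: "- rowsig N Pm \<sigma> i * vl i \<le> w i - cN i" "w i - cN i \<le> rowsig N Pm \<sigma> i * vu i"
      using box i unfolding in_box_def by auto
    have "0 \<le> ll i" "0 \<le> lu i" using nonneg i unfolding multipliers_nonneg_def by auto
    from mult_left_mono[OF box_i(1) this(1)] mult_left_mono[OF box_i(2) this(2)]
    show "rowsig N Pm \<sigma> i * - (ll i * vl i + lu i * vu i) \<le> ll i * (w i - cN i) - lu i * (w i - cN i)"
      by (simp add: algebra_simps)
  qed
  moreover have "(\<Sum>i=1..N-1. ll i * (w i - cN i) - lu i * (w i - cN i))
      = dotv (N-1) w ll - dotv (N-1) cN ll - dotv (N-1) w lu + dotv (N-1) cN lu"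
    unfolding dotv_def by (simp add: sum_subtractf right_diff_distrib mult.commute)
  moreover have "dotv (N-1) \<eta> cN = dotv (N-1) cN \<eta>"
    unfolding dotv_def by (simp add: mult.commute)
  ultimately have "dotv (N-1) cN gb - dotv (N-1) \<eta> cN + (\<Sum>m=1..M. \<theta> m * h m * dotv (N-1) cN (\<Delta> m))
      + (\<Sum>i=1..N-1. rowsig N Pm \<sigma> i * - (ll i * vl i + lu i * vu i)) \<le> dotv (N-1) w gb"
    using stationary_dotv[OF st, of w, unfolded w_sum] stationary_dotv[OF st, of cN, unfolded cN_sum]
    by linarith
  then have "ereal (dotv (N-1) cN gb - dotv (N-1) \<eta> cN + (\<Sum>m=1..M. \<theta> m * h m * dotv (N-1) cN (\<Delta> m)))
      + ereal (\<Sum>i=1..N-1. rowsig N Pm \<sigma> i * - (ll i * vl i + lu i * vu i)) \<le> ereal (dotv (N-1) w gb)"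
    by (simp only: plus_ereal.simps(1) ereal_less_eq(3))
  moreover have "lagrangian_value ll lu \<eta> \<theta>
      \<le> ereal (dotv (N-1) cN gb - dotv (N-1) \<eta> cN + (\<Sum>m=1..M. \<theta> m * h m * dotv (N-1) cN (\<Delta> m)))
        + ereal (\<Sum>i=1..N-1. rowsig N Pm \<sigma> i * - (ll i * vl i + lu i * vu i))"
    unfolding lagrangian_value_def using Pm by (intro add_left_mono INF_lower)
  ultimately show ?thesis by (rule order_trans[rotated])
qed

lemma dual_value_le_lagrangian_value:
  assumes "coupled ll lu tlo tup \<Theta>"
  shows "ereal (dual_value \<eta> \<theta> tlo tup \<Theta>) \<le> lagrangian_value ll lu \<eta> \<theta>"
proof -
  have "ereal (- (\<Sum>i=1..N-1. \<Sum>j=1..N-1. \<Theta> i j) - (\<Sum>i=1..N-1. tlo i) - (\<Sum>i=1..N-1. tup i))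
      \<le> (INF Pm\<in>Smat N. ereal (\<Sum>i=1..N-1. rowsig N Pm \<sigma> i * - (ll i * vl i + lu i * vu i)))"
    using assms doubly_stochastic_lower_bound[of _ N "\<lambda>i. - ll i * vl i - lu i * vu i" \<sigma> tlo tup \<Theta>]
    unfolding coupled_def by (intro INF_greatest) simp
  then have "ereal (dotv (N-1) cN gb - dotv (N-1) \<eta> cN + (\<Sum>m=1..M. \<theta> m * h m * dotv (N-1) cN (\<Delta> m)))
      + ereal (- (\<Sum>i=1..N-1. \<Sum>j=1..N-1. \<Theta> i j) - (\<Sum>i=1..N-1. tlo i) - (\<Sum>i=1..N-1. tup i))
    \<le> lagrangian_value ll lu \<eta> \<theta>"
    unfolding lagrangian_value_def by (rule add_left_mono)
  moreover have "dual_value \<eta> \<theta> tlo tup \<Theta>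
      = (dotv (N-1) cN gb - dotv (N-1) \<eta> cN + (\<Sum>m=1..M. \<theta> m * h m * dotv (N-1) cN (\<Delta> m)))
        + (- (\<Sum>i=1..N-1. \<Sum>j=1..N-1. \<Theta> i j) - (\<Sum>i=1..N-1. tlo i) - (\<Sum>i=1..N-1. tup i))"
    unfolding dual_value_def by (simp add: algebra_simps)
  ultimately show ?thesis by (simp only: plus_ereal.simps(1))
qed

lemma valL_le_valP:
  assumes "(\<Sum>i=1..N-1. cN i) = 1"
  shows "valL N M h \<Delta> gb cN vl vu \<sigma> \<le> valP N M h \<Delta> gb cN vl vu \<sigma>"
  using lagrangian_value_le_primal[OF _ _ _ _ _ assms] by (intro valL_le le_valP)

lemma valD_le_valL: "valD N M h \<Delta> gb cN vl vu \<sigma> \<le> valL N M h \<Delta> gb cN vl vu \<sigma>"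
  using dual_value_le_lagrangian_value le_valL by (intro valD_le) (meson order_trans)

fun primal_coeff :: "primal_row \<Rightarrow> nat + nat \<times> nat \<Rightarrow> real" where
  "primal_coeff (WNonneg i) (Inl i') = (if i' = i then -1 else 0)"
| "primal_coeff (BoxLo i) (Inl i') = (if i' = i then -1 else 0)"
| "primal_coeff (BoxLo i) (Inr (i', j)) = (if i' = i then - (\<sigma> j * vl i) else 0)"
| "primal_coeff (BoxUp i) (Inl i') = (if i' = i then 1 else 0)"
| "primal_coeff (BoxUp i) (Inr (i', j)) = (if i' = i then - (\<sigma> j * vu i) else 0)"
| "primal_coeff (RowLe i) (Inr (i', j)) = (if i' = i then 1 else 0)"
| "primal_coeff (RowGe i) (Inr (i', j)) = (if i' = i then -1 else 0)"
| "primal_coeff (ColLe j) (Inr (i, j')) = (if j' = j then 1 else 0)"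
| "primal_coeff (ColGe j) (Inr (i, j')) = (if j' = j then -1 else 0)"
| "primal_coeff (PiNonneg i j) (Inr (i', j')) = (if i' = i then if j' = j then -1 else 0 else 0)"
| "primal_coeff (PiLe1 i j) (Inr (i', j')) = (if i' = i then if j' = j then 1 else 0 else 0)"
| "primal_coeff (Moment m) (Inl i) = h m * \<Delta> m i"
| "primal_coeff SumLe (Inl i) = 1"
| "primal_coeff SumGe (Inl i) = -1"
| "primal_coeff _ _ = 0"

fun primal_rhs :: "primal_row \<Rightarrow> real" where
  "primal_rhs (BoxLo i) = - cN i"
| "primal_rhs (BoxUp i) = cN i"
| "primal_rhs (RowLe i) = 1"
| "primal_rhs (RowGe i) = -1"
| "primal_rhs (ColLe j) = 1"
| "primal_rhs (ColGe j) = -1"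
| "primal_rhs (PiLe1 i j) = 1"
| "primal_rhs SumLe = 1"
| "primal_rhs SumGe = -1"
| "primal_rhs _ = 0"

lemma primal_row_values:
  fixes x :: "nat + nat \<times> nat \<Rightarrow> real"
  defines "w \<equiv> \<lambda>i. x (Inl i)" and "Pm \<equiv> \<lambda>i j. x (Inr (i, j))"
  assumes "i \<in> {1..N-1}"
  shows "(\<Sum>v\<in>primal_vars (N-1). primal_coeff (WNonneg i) v * x v) = - w i"
    "(\<Sum>v\<in>primal_vars (N-1). primal_coeff (BoxLo i) v * x v) = - w i - rowsig N Pm \<sigma> i * vl i"
    "(\<Sum>v\<in>primal_vars (N-1). primal_coeff (BoxUp i) v * x v) = w i - rowsig N Pm \<sigma> i * vu i"
    "(\<Sum>v\<in>primal_vars (N-1). primal_coeff (RowLe i) v * x v) = (\<Sum>j=1..N-1. Pm i j)"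
    "(\<Sum>v\<in>primal_vars (N-1). primal_coeff (RowGe i) v * x v) = - (\<Sum>j=1..N-1. Pm i j)"
    "(\<Sum>v\<in>primal_vars (N-1). primal_coeff (ColLe i) v * x v) = (\<Sum>i'=1..N-1. Pm i' i)"
    "(\<Sum>v\<in>primal_vars (N-1). primal_coeff (ColGe i) v * x v) = - (\<Sum>i'=1..N-1. Pm i' i)"
    "j \<in> {1..N-1} \<Longrightarrow> (\<Sum>v\<in>primal_vars (N-1). primal_coeff (PiNonneg i j) v * x v) = - Pm i j"
    "j \<in> {1..N-1} \<Longrightarrow> (\<Sum>v\<in>primal_vars (N-1). primal_coeff (PiLe1 i j) v * x v) = Pm i j"
  using assms(3) unfolding w_def Pm_def
  by (simp_all add: sum_primal_vars if_distrib[of "\<lambda>a. a * _"] sum_if_zero cong: if_cong)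
    (simp_all add: rowsig_def sum_distrib_left sum_negf algebra_simps)

lemma primal_global_row_values:
  fixes x :: "nat + nat \<times> nat \<Rightarrow> real"
  shows "(\<Sum>v\<in>primal_vars (N-1). primal_coeff (Moment m) v * x v) = h m * dotv (N-1) (\<lambda>i. x (Inl i)) (\<Delta> m)"
    "(\<Sum>v\<in>primal_vars (N-1). primal_coeff SumLe v * x v) = (\<Sum>i=1..N-1. x (Inl i))"
    "(\<Sum>v\<in>primal_vars (N-1). primal_coeff SumGe v * x v) = - (\<Sum>i=1..N-1. x (Inl i))"
  by (simp_all add: sum_primal_vars dotv_def sum_distrib_left sum_negf algebra_simps)

lemma primal_column_sums:
  assumes "i \<in> {1..N-1}"
  shows "(\<Sum>l\<in>primal_rows (N-1) M. y l * primal_coeff l (Inl i)) = - y (WNonneg i) - y (BoxLo i)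
      + y (BoxUp i) + (\<Sum>m=1..M. y (Moment m) * (h m * \<Delta> m i)) + y SumLe - y SumGe"
    "j \<in> {1..N-1} \<Longrightarrow> (\<Sum>l\<in>primal_rows (N-1) M. y l * primal_coeff l (Inr (i, j))) = - y (BoxLo i) * (\<sigma> j * vl i)
      - y (BoxUp i) * (\<sigma> j * vu i) + y (RowLe i) - y (RowGe i) + y (ColLe j) - y (ColGe j)
      - y (PiNonneg i j) + y (PiLe1 i j)"
  using assms by (simp_all add: sum_primal_rows if_distrib[of "\<lambda>a. _ * a"] sum_if_zero cong: if_cong)

lemma primal_rhs_sum:
  "(\<Sum>l\<in>primal_rows (N-1) M. y l * primal_rhs l) = - (\<Sum>i=1..N-1. y (BoxLo i) * cN i)
     + (\<Sum>i=1..N-1. y (BoxUp i) * cN i) + (\<Sum>i=1..N-1. y (RowLe i)) - (\<Sum>i=1..N-1. y (RowGe i))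
     + (\<Sum>j=1..N-1. y (ColLe j)) - (\<Sum>j=1..N-1. y (ColGe j)) + (\<Sum>i=1..N-1. \<Sum>j=1..N-1. y (PiLe1 i j))
     + y SumLe - y SumGe"
  by (simp add: sum_primal_rows sum_negf)

lemma primal_objective:
  "(\<Sum>v\<in>primal_vars (N-1). case_sum gb (\<lambda>_. 0) v * x v) = dotv (N-1) (\<lambda>i. x (Inl i)) gb"
  by (simp add: sum_primal_vars dotv_def mult.commute)

lemma primal_system_iff:
  "(\<forall>l\<in>primal_rows (N-1) M. (\<Sum>v\<in>primal_vars (N-1). primal_coeff l v * x v) \<le> primal_rhs l) \<longleftrightarrow>
     (\<lambda>i. x (Inl i)) \<in> Vhat N M h \<Delta> \<and> (\<lambda>i j. x (Inr (i, j))) \<in> Smat N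
     \<and> in_box (\<lambda>i j. x (Inr (i, j))) (\<lambda>i. x (Inl i))"
  unfolding ball_primal_rows Vhat_def Smat_def in_box_def
  by (simp only: primal_row_values primal_global_row_values cong: ball_cong) auto

lemma certificate_le_valD:
  assumes cN_sum: "(\<Sum>i=1..N-1. cN i) = 1" and y_nonneg: "\<forall>l\<in>primal_rows (N-1) M. 0 \<le> y l"
    and y_cols: "\<forall>v\<in>primal_vars (N-1).
      (\<Sum>l\<in>primal_rows (N-1) M. y l * primal_coeff l v) = - case_sum gb (\<lambda>_. 0) v"
  shows "ereal (- (\<Sum>l\<in>primal_rows (N-1) M. y l * primal_rhs l)) \<le> valD N M h \<Delta> gb cN vl vu \<sigma>"
proof -
  define ll lu \<eta> \<theta> where "ll i = y (BoxLo i)" and "lu i = y (BoxUp i)" and "\<eta> i = y (WNonneg i)"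
    and "\<theta> m = y (Moment m)" for i m
  define tlo tup \<Theta> where "tlo i = y (RowLe i) - y (RowGe i)" and "tup j = y (ColLe j) - y (ColGe j)"
    and "\<Theta> i j = y (PiLe1 i j)" for i j
  define \<beta> where "\<beta> = y SumLe - y SumGe"
  have st: "stationary ll lu \<beta> \<eta> \<theta>"
    unfolding stationary_def
  proof
    fix i assume i: "i \<in> {1..N-1}"
    with y_cols have "(\<Sum>l\<in>primal_rows (N-1) M. y l * primal_coeff l (Inl i)) = - gb i"
      unfolding ball_primal_vars by simp
    then show "gb i - ll i + lu i + \<beta> - \<eta> i + (\<Sum>m=1..M. \<theta> m * h m * \<Delta> m i) = 0"
      unfolding primal_column_sums(1)[OF i] ll_def lu_def \<eta>_def \<theta>_def \<beta>_def by (simp add: mult.assoc)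
  qed
  have nonneg: "multipliers_nonneg ll lu \<eta> \<theta>"
    using y_nonneg unfolding multipliers_nonneg_def ball_primal_rows ll_def lu_def \<eta>_def \<theta>_def by auto
  have "\<forall>i\<in>{1..N-1}. \<forall>j\<in>{1..N-1}. 0 \<le> (- ll i * vl i - lu i * vu i) * \<sigma> j + tlo i + tup j + \<Theta> i j"
  proof (intro ballI)
    fix i j assume ij: "i \<in> {1..N-1}" "j \<in> {1..N-1}"
    with y_cols have "(\<Sum>l\<in>primal_rows (N-1) M. y l * primal_coeff l (Inr (i, j))) = 0"
      unfolding ball_primal_vars by simp
    moreover have "0 \<le> y (PiNonneg i j)" using y_nonneg ij unfolding ball_primal_rows by blast
    ultimately show "0 \<le> (- ll i * vl i - lu i * vu i) * \<sigma> j + tlo i + tup j + \<Theta> i j"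
      unfolding primal_column_sums(2)[OF ij] ll_def lu_def tlo_def tup_def \<Theta>_def
      by (simp add: algebra_simps)
  qed
  moreover have "\<forall>i\<in>{1..N-1}. \<forall>j\<in>{1..N-1}. 0 \<le> \<Theta> i j"
    using y_nonneg unfolding ball_primal_rows \<Theta>_def by blast
  ultimately have "coupled ll lu tlo tup \<Theta>" unfolding coupled_def ..
  note dual_feasible = st nonneg this
  from cN_sum stationary_dotv[OF st, of cN]
  have "dotv (N-1) cN gb = dotv (N-1) cN ll - dotv (N-1) cN lu - \<beta> + dotv (N-1) cN \<eta>
      - (\<Sum>m=1..M. \<theta> m * h m * dotv (N-1) cN (\<Delta> m))" by simp
  moreover have "dotv (N-1) \<eta> cN = dotv (N-1) cN \<eta>" "dotv (N-1) cN ll = (\<Sum>i=1..N-1. y (BoxLo i) * cN i)"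
    "dotv (N-1) cN lu = (\<Sum>i=1..N-1. y (BoxUp i) * cN i)"
    unfolding dotv_def ll_def lu_def by (simp_all add: mult.commute)
  moreover have "(\<Sum>i=1..N-1. tlo i) = (\<Sum>i=1..N-1. y (RowLe i)) - (\<Sum>i=1..N-1. y (RowGe i))"
    "(\<Sum>j=1..N-1. tup j) = (\<Sum>j=1..N-1. y (ColLe j)) - (\<Sum>j=1..N-1. y (ColGe j))"
    unfolding tlo_def tup_def by (simp_all add: sum_subtractf)
  ultimately have "dual_value \<eta> \<theta> tlo tup \<Theta> = - (\<Sum>l\<in>primal_rows (N-1) M. y l * primal_rhs l)"
    unfolding dual_value_def primal_rhs_sum \<Theta>_def \<beta>_def by linarith
  with le_valD[OF dual_feasible] show ?thesis by simp
qed

lemma less_valP_imp_less_valD: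
  assumes cN: "cN \<in> Vhat N M h \<Delta>" and v_nonneg: "\<forall>i\<in>{1..N-1}. 0 \<le> vl i \<and> 0 \<le> vu i"
    and \<sigma>_nonneg: "\<forall>j\<in>{1..N-1}. 0 \<le> \<sigma> j" and v: "ereal v < valP N M h \<Delta> gb cN vl vu \<sigma>"
  shows "ereal v < valD N M h \<Delta> gb cN vl vu \<sigma>"
proof -
  define x\<^sub>0 :: "nat + nat \<times> nat \<Rightarrow> real" where "x\<^sub>0 = case_sum cN (case_prod id_mat)"
  have "in_box id_mat cN"
    unfolding in_box_def using v_nonneg \<sigma>_nonneg by (simp add: rowsig_id_mat)
  then have feasible: "\<forall>l\<in>primal_rows (N-1) M. (\<Sum>v\<in>primal_vars (N-1). primal_coeff l v * x\<^sub>0 v) \<le> primal_rhs l"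
    unfolding primal_system_iff x\<^sub>0_def using cN id_mat_in_Smat by simp
  have bound: "v < (\<Sum>v\<in>primal_vars (N-1). case_sum gb (\<lambda>_. 0) v * x v)"
    if "\<forall>l\<in>primal_rows (N-1) M. (\<Sum>v\<in>primal_vars (N-1). primal_coeff l v * x v) \<le> primal_rhs l" for x
  proof -
    from that have "valP N M h \<Delta> gb cN vl vu \<sigma> \<le> ereal (dotv (N-1) (\<lambda>i. x (Inl i)) gb)"
      unfolding primal_system_iff by (blast intro: valP_le)
    from less_le_trans[OF v this] show ?thesis unfolding primal_objective by simp
  qed
  obtain y where "\<forall>l\<in>primal_rows (N-1) M. 0 \<le> y l"
    and "\<forall>v\<in>primal_vars (N-1). (\<Sum>l\<in>primal_rows (N-1) M. y l * primal_coeff l v) = - case_sum gb (\<lambda>_. 0) v"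
    and y_val: "v < - (\<Sum>l\<in>primal_rows (N-1) M. y l * primal_rhs l)"
    using lp_dual_certificate[OF finite_primal_rows finite_primal_vars feasible bound] by blast
  moreover have "(\<Sum>i=1..N-1. cN i) = 1" using cN unfolding Vhat_def by blast
  ultimately have "ereal (- (\<Sum>l\<in>primal_rows (N-1) M. y l * primal_rhs l)) \<le> valD N M h \<Delta> gb cN vl vu \<sigma>"
    by (intro certificate_le_valD)
  moreover from y_val have "ereal v < ereal (- (\<Sum>l\<in>primal_rows (N-1) M. y l * primal_rhs l))" by simp
  ultimately show ?thesis by (simp only: less_le_trans)
qed

lemma valP_le_valD:
  assumes "cN \<in> Vhat N M h \<Delta>" "\<forall>i\<in>{1..N-1}. 0 \<le> vl i \<and> 0 \<le> vu i" "\<forall>j\<in>{1..N-1}. 0 \<le> \<sigma> j"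
  shows "valP N M h \<Delta> gb cN vl vu \<sigma> \<le> valD N M h \<Delta> gb cN vl vu \<sigma>"
proof (rule dense_le)
  fix u assume u: "u < valP N M h \<Delta> gb cN vl vu \<sigma>"
  show "u \<le> valD N M h \<Delta> gb cN vl vu \<sigma>"
  proof (cases u)
    case (real v)
    with less_valP_imp_less_valD[OF assms] u show ?thesis by (simp add: less_imp_le)
  qed (use u in auto)
qed

theorem valP_valL_eq_valD:
  assumes "cN \<in> Vhat N M h \<Delta>" "\<forall>i\<in>{1..N-1}. 0 \<le> vl i \<and> 0 \<le> vu i" "\<forall>j\<in>{1..N-1}. 0 \<le> \<sigma> j"
  shows "valP N M h \<Delta> gb cN vl vu \<sigma> = valD N M h \<Delta> gb cN vl vu \<sigma>
    \<and> valL N M h \<Delta> gb cN vl vu \<sigma> = valD N M h \<Delta> gb cN vl vu \<sigma>"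
proof -
  have "(\<Sum>i=1..N-1. cN i) = 1" using assms(1) unfolding Vhat_def by blast
  with valD_le_valL valL_le_valP valP_le_valD[OF assms] show ?thesis
    by (meson antisym order.trans)
qed

end

lemma sum_Rmap:
  assumes "3 \<le> N"
  shows "(\<Sum>i=1..N-1. Rmap N v i) = 1"
proof -
  have "N - 1 = Suc (N - 2)" using assms by simp
  then have "(\<Sum>i=1..N-1. Rmap N v i) = (\<Sum>i=1..N-2. Rmap N v i) + Rmap N v (N - 1)"
    by simp
  also have "(\<Sum>i=1..N-2. Rmap N v i) = (\<Sum>i=1..N-2. v i)"
    by (rule sum.cong) (auto simp: Rmap_def)
  finally show ?thesis by (simp add: Rmap_def)
qed

lemma Rmap_in_unit_interval:
  assumes "3 \<le> N" "v \<in> Vset N M h \<Delta>" "i \<in> {1..N-1}"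
  shows "0 \<le> Rmap N v i \<and> Rmap N v i \<le> 1"
proof -
  have v_nonneg: "\<forall>i\<in>{1..N-2}. 0 \<le> v i" and v_sum: "(\<Sum>i=1..N-2. v i) \<le> 1"
    using assms(2) unfolding Vset_def by auto
  show ?thesis
  proof (cases "i = N - 1")
    case True
    then show ?thesis using v_sum sum_nonneg[of "{1..N-2}" v] v_nonneg by (simp add: Rmap_def)
  next
    case False
    with assms(3) have "i \<in> {1..N-2}" by auto
    with v_nonneg have "0 \<le> v i" "v i \<le> (\<Sum>i=1..N-2. v i)" by (auto intro: member_le_sum)
    with False v_sum show ?thesis by (simp add: Rmap_def)
  qed
qed

lemma pos_slacks_imp_Vset: "pos_slacks N M h \<Delta> c \<Longrightarrow> c \<in> Vset N M h \<Delta>"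
  unfolding pos_slacks_def Vset_def by (auto simp: less_imp_le)

lemma Rmap_in_Vhat:
  assumes "3 \<le> N" "pos_slacks N M h \<Delta> c"
  shows "Rmap N c \<in> Vhat N M h \<Delta>"
proof -
  have "c \<in> Vset N M h \<Delta>" using assms(2) by (rule pos_slacks_imp_Vset)
  then show ?thesis
    using assms Rmap_in_unit_interval sum_Rmap unfolding Vhat_def pos_slacks_def by (auto simp: less_imp_le)
qed

lemma vlow_vup_nonneg:
  assumes "3 \<le> N" "c \<in> Vset N M h \<Delta>" "i \<in> {1..N-1}"
  shows "0 \<le> vlow N M h \<Delta> c i \<and> 0 \<le> vup N M h \<Delta> c i"
proof -
  define S where "S = {Rmap N v i - Rmap N c i | v. v \<in> Vset N M h \<Delta>}"
  have "0 \<in> S" unfolding S_def using assms(2) by force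
  moreover have "\<forall>s\<in>S. -1 \<le> s \<and> s \<le> 1"
    unfolding S_def using Rmap_in_unit_interval[OF assms(1) _ assms(3), of _ M h \<Delta>]
      Rmap_in_unit_interval[OF assms] by force
  then have "bdd_below S" "bdd_above S" by (auto intro!: bdd_belowI[of _ "-1"] bdd_aboveI[of _ 1])
  ultimately have "Inf S \<le> 0" "0 \<le> Sup S" by (auto intro: cInf_lower cSup_upper)
  then show ?thesis unfolding vlow_def vup_def S_def[symmetric] by simp
qed

lemma sigmav_nonneg: "0 < \<gamma> \<Longrightarrow> 0 \<le> sigmav \<gamma> N j"
  unfolding sigmav_def varsigma_def by (intro divide_nonneg_nonneg mult_nonneg_nonneg) auto


theorem theorem3:
  fixes N K M :: nat and x :: "nat \<Rightarrow> real" and z :: "real^'n" and xi :: "nat \<Rightarrow> real^'n"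
    and r1 r2 r3 p h c :: "nat \<Rightarrow> real" and \<gamma> :: real
  assumes "N \<ge> 3"
    and "\<forall>i\<in>{1..<N}. x i < x (Suc i)"
    and "K \<ge> 1"
    and "\<forall>k\<in>{1..K}. x 1 \<le> z \<bullet> xi k \<and> z \<bullet> xi k \<le> x N"
    and "M \<ge> 1"
    and "\<forall>m\<in>{1..M}. r1 m \<le> r3 m \<and> x 1 \<le> r1 m \<and> r1 m \<le> x N \<and> x 1 \<le> r2 m \<and> r2 m \<le> x N
           \<and> x 1 \<le> r3 m \<and> r3 m \<le> x N \<and> 0 \<le> p m \<and> p m \<le> 1 \<and> (h m = -1 \<or> h m = 1)"
    and "\<exists>v. in_int_V N M h (DeltaF N x p r1 r2 r3) v"
    and "analytic_center N M h (DeltaF N x p r1 r2 r3) c"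
    and "0 < \<gamma>" and "\<gamma> \<le> 1"
  shows "valP N M h (DeltaF N x p r1 r2 r3) (gbar N x K z xi) (Rmap N c)
            (vlow N M h (DeltaF N x p r1 r2 r3) c) (vup N M h (DeltaF N x p r1 r2 r3) c) (sigmav \<gamma> N)
       = valD N M h (DeltaF N x p r1 r2 r3) (gbar N x K z xi) (Rmap N c)
            (vlow N M h (DeltaF N x p r1 r2 r3) c) (vup N M h (DeltaF N x p r1 r2 r3) c) (sigmav \<gamma> N)
     \<and> valL N M h (DeltaF N x p r1 r2 r3) (gbar N x K z xi) (Rmap N c)
            (vlow N M h (DeltaF N x p r1 r2 r3) c) (vup N M h (DeltaF N x p r1 r2 r3) c) (sigmav \<gamma> N)
       = valD N M h (DeltaF N x p r1 r2 r3) (gbar N x K z xi) (Rmap N c)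
            (vlow N M h (DeltaF N x p r1 r2 r3) c) (vup N M h (DeltaF N x p r1 r2 r3) c) (sigmav \<gamma> N)"
proof -
  \<comment> \<open>Only the feasibility of the analytic center and the signs of \<open>v\<close> and \<open>\<sigma>\<close> enter.\<close>
  let ?\<Delta> = "DeltaF N x p r1 r2 r3"
  have slacks: "pos_slacks N M h ?\<Delta> c"
    using assms(8) unfolding analytic_center_def by blast
  then have "c \<in> Vset N M h ?\<Delta>" by (rule pos_slacks_imp_Vset)
  then have "\<forall>i\<in>{1..N-1}. 0 \<le> vlow N M h ?\<Delta> c i \<and> 0 \<le> vup N M h ?\<Delta> c i"
    using vlow_vup_nonneg[OF assms(1)] by blast
  moreover have "\<forall>j\<in>{1..N-1}. 0 \<le> sigmav \<gamma> N j"
    using sigmav_nonneg[OF assms(9)] by blast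
  ultimately show ?thesis
    using valP_valL_eq_valD[OF Rmap_in_Vhat[OF assms(1) slacks]] by blast
qed

end
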